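(* Let $J>0$, $h\ne0$, $\rho>0$, and $\varepsilon\in\mathcal{E}_{h,\rho}$. Define $m=-\frac hJ+\mathrm{sgn}(h)\sqrt{\frac{h^2}{J^2}-\frac{2\varepsilon}J}$ and $\mu=-\frac m{\rho-m^2}$. Let $I\subset\Lambda$ be an index set of fixed size and $f:\mathbb{R}^{|I|}\to\mathbb{R}$ a bounded $1$-Lipschitz function with respect to $\|\cdot\|_2$. Then \[ \langle f\circ P_I\rangle_{\mathrm{MC}}^{\varepsilon,\rho;N}=\langle f\circ P_I\rangle_{\mathrm{C}}^{\mu,\rho;N}+O(N^{-1/2}). \]
   Context: Mean-field spherical model: $\Lambda$ finite lattice, $N=|\Lambda|$, $\phi\in\mathbb{R}^N$, $H[\phi]=-\frac J{2N}(\sum_x\phi_x)^2-h\sum_x\phi_x$; $P_I$ restricts to sites in $I$. For $|m|<\sqrt\rho$, $\mu_{\mathrm{MC}}^{m,\rho;N}$ is the normalized uniform surface measure on $\{\sum\phi_x=mN,\ \sum\phi_x^2=\rho N\}$ and $Z_{\mathrm{MC}}(m,\rho;N)=(\rho-m^2)^{(N-3)/2}$. For $\varepsilon\le\frac{h^2}{2J}$, $m_\pm=-\frac hJ\pm\sqrt{\frac{h^2}{J^2}-\frac{2\varepsilon}J}$. Fixed energy ensemble: if $\varepsilon<\frac{h^2}{2J}$ and $m_\pm^2<\rho$, $\langle f\rangle_{\mathrm{MC}}^{\varepsilon,\rho;N}=\sum_\pm\frac{Z_{\mathrm{MC}}(m_\pm,\rho;N)}{Z_{\mathrm{MC}}(m_+,\rho;N)+Z_{\mathrm{MC}}(m_-,\rho;N)}\langle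 f\rangle_{\mathrm{MC}}^{m_\pm,\rho;N}$; if $\varepsilon<\frac{h^2}{2J}$ and $\min(m_\pm^2)<\rho\le\max(m_\pm^2)$, it is $\langle f\rangle_{\mathrm{MC}}^{m',\rho;N}$ with $m'$ the one of $m_\pm$ of smaller absolute value; if $\varepsilon=\frac{h^2}{2J}$ and $\rho>h^2/J^2$, it is $\langle f\rangle_{\mathrm{MC}}^{-h/J,\rho;N}$. $\mathcal{E}_{h,\rho}=\{\varepsilon\le\frac{h^2}{2J}:|\frac{|h|}J-\sqrt{\frac{h^2}{J^2}-\frac{2\varepsilon}J}|<\sqrt\rho\}$. Auxiliary canonical ensemble: $\langle f\rangle_{\mathrm{C}}^{\mu,\rho;N}=\frac{\int_{-\sqrt\rho}^{\sqrt\rho}dm'\,e^{-\mu Nm'}(\rho-m'^2)^{(N-3)/2}\langle f\rangle_{\mathrm{MC}}^{m',\rho;N}}{\int_{-\sqrt\rho}^{\sqrt\rho}dm'\,e^{-\mu Nm'}(\rho-m'^2)^{(N-3)/2}}$. *)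

theory Defs
  imports "HOL-Probability.Probability" "HOL-Library.Landau_Symbols"
begin

text \<open>Lattice: Lambda = {0..<N}; configurations phi :: nat => real (only coordinates < N matter).\<close>

definition std_gauss :: "real measure" where
  "std_gauss = density lborel std_normal_density"

text \<open>Configuration on the sphere {sum phi = m N, sum phi^2 = rho N} obtained from a
 Gaussian vector g by projecting onto the hyperplane orthogonal to (1,...,1),
 normalizing and translating. Its law (g standard Gaussian on R^N) is the
 normalized uniform surface measure on that (N-2)-sphere.\<close>
definition mc_config :: "nat \<Rightarrow> real \<Rightarrow> real \<Rightarrow> (nat \<Rightarrow> real) \<Rightarrow> (nat \<Rightarrow> real)" where
  "mc_config N m \<rho> g =
     (let gbar = (\<Sum>y<N. g y) / real N;
          r = sqrt (\<Sum>y<N. (g y - gbar)\<^sup>2)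
      in (\<lambda>x. if x < N then m + sqrt (real N * (\<rho> - m\<^sup>2)) * (g x - gbar) / r else 0))"

definition mc_expect :: "nat \<Rightarrow> real \<Rightarrow> real \<Rightarrow> ((nat \<Rightarrow> real) \<Rightarrow> real) \<Rightarrow> real" where
  "mc_expect N m \<rho> F =
     integral\<^sup>L (PiM {..<N} (\<lambda>_. std_gauss)) (\<lambda>g. F (mc_config N m \<rho> g))"

definition Z_MC :: "nat \<Rightarrow> real \<Rightarrow> real \<Rightarrow> real" where
  "Z_MC N m \<rho> = (\<rho> - m\<^sup>2) powr ((real N - 3) / 2)"

definition m_plus :: "real \<Rightarrow> real \<Rightarrow> real \<Rightarrow> real" where
  "m_plus J h \<epsilon> = - h / J + sqrt (h\<^sup>2 / J\<^sup>2 - 2 * \<epsilon> / J)"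

definition m_minus :: "real \<Rightarrow> real \<Rightarrow> real \<Rightarrow> real" where
  "m_minus J h \<epsilon> = - h / J - sqrt (h\<^sup>2 / J\<^sup>2 - 2 * \<epsilon> / J)"

text \<open>Fixed energy ensemble < F >_MC^{eps,rho;N} (undefined outside the three cases).\<close>
definition fe_expect :: "real \<Rightarrow> real \<Rightarrow> nat \<Rightarrow> real \<Rightarrow> real \<Rightarrow> ((nat \<Rightarrow> real) \<Rightarrow> real) \<Rightarrow> real" where
  "fe_expect J h N \<epsilon> \<rho> F =
    (let mp = m_plus J h \<epsilon>; mm = m_minus J h \<epsilon> in
     if \<epsilon> < h\<^sup>2 / (2 * J) \<and> mp\<^sup>2 < \<rho> \<and> mm\<^sup>2 < \<rho> then
       (Z_MC N mp \<rho> * mc_expect N mp \<rho> F + Z_MC N mm \<rho> * mc_expect N mm \<rho> F)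
         / (Z_MC N mp \<rho> + Z_MC N mm \<rho>)
     else if \<epsilon> < h\<^sup>2 / (2 * J) \<and> min (mp\<^sup>2) (mm\<^sup>2) < \<rho> \<and> \<rho> \<le> max (mp\<^sup>2) (mm\<^sup>2) then
       mc_expect N (if \<bar>mp\<bar> < \<bar>mm\<bar> then mp else mm) \<rho> F
     else if \<epsilon> = h\<^sup>2 / (2 * J) \<and> \<rho> > h\<^sup>2 / J\<^sup>2 then
       mc_expect N (- h / J) \<rho> F
     else undefined)"

definition energy_set :: "real \<Rightarrow> real \<Rightarrow> real \<Rightarrow> real set" where
  "energy_set J h \<rho> = {\<epsilon>. \<epsilon> \<le> h\<^sup>2 / (2 * J) \<and>
      \<bar>\<bar>h\<bar> / J - sqrt (h\<^sup>2 / J\<^sup>2 - 2 * \<epsilon> / J)\<bar> < sqrt \<rho>}"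

definition c_expect :: "nat \<Rightarrow> real \<Rightarrow> real \<Rightarrow> ((nat \<Rightarrow> real) \<Rightarrow> real) \<Rightarrow> real" where
  "c_expect N \<mu> \<rho> F =
     integral {- sqrt \<rho>..sqrt \<rho>}
        (\<lambda>m'. exp (- \<mu> * real N * m') * (\<rho> - m'\<^sup>2) powr ((real N - 3) / 2) * mc_expect N m' \<rho> F)
     / integral {- sqrt \<rho>..sqrt \<rho>}
        (\<lambda>m'. exp (- \<mu> * real N * m') * (\<rho> - m'\<^sup>2) powr ((real N - 3) / 2))"

text \<open>Projection P_I, with I = idx ` UNIV for an injective idx :: 'k => nat.\<close>
definition proj :: "('k::finite \<Rightarrow> nat) \<Rightarrow> (nat \<Rightarrow> real) \<Rightarrow> real ^ 'k" where
  "proj idx \<phi> = (\<chi> i. \<phi> (idx i))"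

end

theory Submission
  imports Defs "HOL-Real_Asymp.Real_Asymp"
begin

(*
  The canonical expectation averages the microcanonical expectations over the magnetisation t
  with weight exp (- \<mu> N t) (\<rho> - t\<^sup>2) powr ((N - 3) / 2) = exp (- 3 \<mu> t + (N - 3) \<phi>(t)), where
  \<phi>(t) = ln (\<rho> - t\<^sup>2) / 2 - \<mu> t. For \<mu> = - m / (\<rho> - m\<^sup>2) the function \<phi> has a nondegenerate
  maximum at m, so by Laplace's method the weighted mean of |t - m| is O(N^(-1/2)).
  On the other hand t \<mapsto> <f \<circ> P_I>_MC^{t,\<rho>;N} is Lipschitz uniformly in N: a point of the sphere is
  t + sqrt (N (\<rho> - t\<^sup>2)) u with u a random unit vector orthogonal to (1, ..., 1), and by
  exchangeability E u_x\<^sup>2 \<le> 1 / N, hence E |u_x| \<le> N^(-1/2). Together, the canonical expectation is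
  within O(N^(-1/2)) of the microcanonical one at m. The fixed energy expectation is either the
  latter or a mixture with the other root m', whose relative weight
  ((\<rho> - m'\<^sup>2) / (\<rho> - m\<^sup>2)) powr ((N - 3) / 2) decays exponentially because |m| < |m'|.
*)

section \<open>Laplace asymptotics of the canonical weight\<close>

lemma power2_less_imp_pos: "(m :: real)\<^sup>2 < \<rho> \<Longrightarrow> 0 < \<rho>"
  using zero_le_power2[of m] by linarith

definition canonical_weight :: "nat \<Rightarrow> real \<Rightarrow> real \<Rightarrow> real \<Rightarrow> real" where
  "canonical_weight N \<mu> \<rho> t = exp (- \<mu> * real N * t) * (\<rho> - t\<^sup>2) powr ((real N - 3) / 2)"

lemma c_expect_eq_weighted_mean:
  "c_expect N \<mu> \<rho> F =
     integral {- sqrt \<rho>..sqrt \<rho>} (\<lambda>t. canonical_weight N \<mu> \<rho> t * mc_expect N t \<rho> F)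
     / integral {- sqrt \<rho>..sqrt \<rho>} (canonical_weight N \<mu> \<rho>)"
  unfolding c_expect_def canonical_weight_def[abs_def] by (rule refl)

lemma canonical_weight_nonneg: "0 \<le> canonical_weight N \<mu> \<rho> t"
  by (simp add: canonical_weight_def)

lemma continuous_on_canonical_weight:
  assumes "N \<ge> 4"
  shows "continuous_on {- sqrt \<rho>..sqrt \<rho>} (canonical_weight N \<mu> \<rho>)"
proof -
  have "\<rho> - t\<^sup>2 \<ge> 0" if "t \<in> {- sqrt \<rho>..sqrt \<rho>}" for t
    using that real_sqrt_le_iff[of "t\<^sup>2" \<rho>] by (auto simp: abs_le_iff)
  then show ?thesis
    unfolding canonical_weight_def using assms
    by (intro continuous_intros continuous_on_powr') auto
qed

definition free_energy :: "real \<Rightarrow> real \<Rightarrow> real \<Rightarrow> real" where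
  "free_energy \<mu> \<rho> t = ln (\<rho> - t\<^sup>2) / 2 - \<mu> * t"

lemma canonical_weight_eq_exp_free_energy:
  assumes "t\<^sup>2 < \<rho>"
  shows "canonical_weight N \<mu> \<rho> t = exp (- 3 * \<mu> * t) * exp ((real N - 3) * free_energy \<mu> \<rho> t)"
proof -
  have "canonical_weight N \<mu> \<rho> t = exp (- \<mu> * real N * t + (real N - 3) / 2 * ln (\<rho> - t\<^sup>2))"
    using assms by (simp add: canonical_weight_def powr_def exp_add[symmetric] algebra_simps)
  also have "\<dots> = exp (- 3 * \<mu> * t + (real N - 3) * free_energy \<mu> \<rho> t)"
    by (simp add: free_energy_def algebra_simps)
  finally show ?thesis by (simp add: mult_exp_exp algebra_simps)
qed

text \<open>The choice \<open>\<mu> = - m / (\<rho> - m\<^sup>2)\<close> makes \<open>m\<close> the critical point of the free energy.\<close>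
lemma free_energy_le_quadratic:
  assumes "m\<^sup>2 < \<rho>" "t\<^sup>2 < \<rho>"
  defines "\<mu> \<equiv> - m / (\<rho> - m\<^sup>2)"
  shows "free_energy \<mu> \<rho> t \<le> free_energy \<mu> \<rho> m - (t - m)\<^sup>2 / (2 * (\<rho> - m\<^sup>2))"
proof -
  define v where "v = \<rho> - m\<^sup>2"
  have v: "v > 0" using assms by (simp add: v_def)
  have "ln (\<rho> - t\<^sup>2) - ln v = ln ((\<rho> - t\<^sup>2) / v)"
    using assms v by (simp add: ln_div)
  also have "\<dots> \<le> (\<rho> - t\<^sup>2) / v - 1"
    using assms v by (intro ln_le_minus_one) simp
  finally have "ln (\<rho> - t\<^sup>2) \<le> ln v + (m\<^sup>2 - t\<^sup>2) / v"
    using v by (simp add: v_def field_simps)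
  moreover have "(m\<^sup>2 - t\<^sup>2) / v / 2 - \<mu> * t = - \<mu> * m - (t - m)\<^sup>2 / (2 * v)"
    using v unfolding \<mu>_def v_def[symmetric] by (simp add: field_simps power2_eq_square)
  ultimately show ?thesis
    unfolding free_energy_def v_def[symmetric] by (simp add: v_def[symmetric])
qed

lemma ln_add_one_ge:
  fixes y :: real
  assumes "\<bar>y\<bar> \<le> 1 / 2"
  shows "y - 2 * y\<^sup>2 \<le> ln (1 + y)"
proof (cases "y \<ge> 0")
  case True
  then have "y - y\<^sup>2 \<le> ln (1 + y)"
    using assms by (intro ln_one_plus_pos_lower_bound) auto
  then show ?thesis by (smt (verit) zero_le_power2)
next
  case False
  then show ?thesis
    using assms ln_one_minus_pos_lower_bound[of "- y"] by simp
qed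

lemma abs_power2_diff_le:
  fixes t m r :: real
  assumes "\<bar>t\<bar> \<le> r" "\<bar>m\<bar> \<le> r"
  shows "\<bar>t\<^sup>2 - m\<^sup>2\<bar> \<le> 2 * r * \<bar>t - m\<bar>"
proof -
  have "\<bar>t\<^sup>2 - m\<^sup>2\<bar> = \<bar>t - m\<bar> * \<bar>t + m\<bar>"
    by (simp add: power2_eq_square abs_mult[symmetric] algebra_simps)
  also have "\<dots> \<le> \<bar>t - m\<bar> * (2 * r)" using assms by (intro mult_left_mono) auto
  finally show ?thesis by (simp add: mult.commute)
qed

lemma free_energy_ge_quadratic:
  assumes "m\<^sup>2 < \<rho>" "\<bar>t\<bar> \<le> sqrt \<rho>" "\<bar>t - m\<bar> \<le> (\<rho> - m\<^sup>2) / (4 * sqrt \<rho>)"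
  defines "\<mu> \<equiv> - m / (\<rho> - m\<^sup>2)"
  shows "t\<^sup>2 < \<rho>"
    and "free_energy \<mu> \<rho> t \<ge> free_energy \<mu> \<rho> m
           - (1 / (2 * (\<rho> - m\<^sup>2)) + 4 * \<rho> / (\<rho> - m\<^sup>2)\<^sup>2) * (t - m)\<^sup>2"
proof -
  define v where "v = \<rho> - m\<^sup>2"
  have v: "v > 0" using assms by (simp add: v_def)
  have sqrt_\<rho>: "sqrt \<rho> > 0" using power2_less_imp_pos[OF assms(1)] by simp
  have "\<bar>m\<bar> \<le> sqrt \<rho>" using real_le_rsqrt[of "\<bar>m\<bar>" \<rho>] assms(1) by simp
  define y where "y = (m\<^sup>2 - t\<^sup>2) / v"
  have "\<bar>y\<bar> \<le> 2 * sqrt \<rho> * \<bar>t - m\<bar> / v"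
    using abs_power2_diff_le[OF assms(2) \<open>\<bar>m\<bar> \<le> sqrt \<rho>\<close>] v
    by (simp add: y_def abs_div divide_right_mono abs_minus_commute)
  then have y_sq: "y\<^sup>2 \<le> 4 * \<rho> / v\<^sup>2 * (t - m)\<^sup>2" and y_half: "\<bar>y\<bar> \<le> 1 / 2"
  proof -
    assume y: "\<bar>y\<bar> \<le> 2 * sqrt \<rho> * \<bar>t - m\<bar> / v"
    have "y\<^sup>2 \<le> (2 * sqrt \<rho> * \<bar>t - m\<bar> / v)\<^sup>2"
      using power_mono[OF y abs_ge_zero, of 2] by simp
    also have "\<dots> = 4 * \<rho> / v\<^sup>2 * (t - m)\<^sup>2"
      using sqrt_\<rho> by (simp add: power_mult_distrib power_divide)
    finally show "y\<^sup>2 \<le> 4 * \<rho> / v\<^sup>2 * (t - m)\<^sup>2" .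
    have "2 * sqrt \<rho> * \<bar>t - m\<bar> \<le> 2 * sqrt \<rho> * (v / (4 * sqrt \<rho>))"
      using assms(3) sqrt_\<rho> unfolding v_def by (intro mult_left_mono) auto
    also have "\<dots> = v / 2" using sqrt_\<rho> by simp
    finally have "2 * sqrt \<rho> * \<bar>t - m\<bar> / v \<le> (v / 2) / v"
      using v by (intro divide_right_mono) auto
    also have "\<dots> = 1 / 2" using v by simp
    finally show "\<bar>y\<bar> \<le> 1 / 2" using y by linarith
  qed
  have "v * (1 + y) = v + (m\<^sup>2 - t\<^sup>2)" using v by (simp add: y_def distrib_left)
  then have \<rho>_t: "\<rho> - t\<^sup>2 = v * (1 + y)" by (simp add: v_def)
  have "1 + y > 0" using y_half by linarith
  then show "t\<^sup>2 < \<rho>" using \<rho>_t v by (smt (verit) mult_pos_pos)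
  have "ln (\<rho> - t\<^sup>2) = ln v + ln (1 + y)"
    using \<rho>_t v \<open>1 + y > 0\<close> by (simp add: ln_mult)
  moreover have "y / 2 - \<mu> * t = - \<mu> * m - (t - m)\<^sup>2 / (2 * v)"
    using v unfolding \<mu>_def v_def[symmetric] y_def by (simp add: field_simps power2_eq_square)
  moreover have "(1 / (2 * v) + 4 * \<rho> / v\<^sup>2) * (t - m)\<^sup>2 = (t - m)\<^sup>2 / (2 * v) + 4 * \<rho> / v\<^sup>2 * (t - m)\<^sup>2"
    by (simp add: distrib_right)
  ultimately show "free_energy \<mu> \<rho> t \<ge> free_energy \<mu> \<rho> m
           - (1 / (2 * (\<rho> - m\<^sup>2)) + 4 * \<rho> / (\<rho> - m\<^sup>2)\<^sup>2) * (t - m)\<^sup>2"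
    using ln_add_one_ge[OF y_half] y_sq unfolding free_energy_def v_def[symmetric] by linarith
qed

lemma canonical_weight_le:
  assumes "m\<^sup>2 < \<rho>" "\<bar>t\<bar> \<le> sqrt \<rho>" "N \<ge> 3"
  defines "\<mu> \<equiv> - m / (\<rho> - m\<^sup>2)"
  shows "canonical_weight N \<mu> \<rho> t \<le> exp (3 * \<bar>\<mu>\<bar> * sqrt \<rho>) * exp ((real N - 3) * free_energy \<mu> \<rho> m)
           * exp (- ((real N - 3) / (2 * (\<rho> - m\<^sup>2))) * (t - m)\<^sup>2)"
proof (cases "t\<^sup>2 < \<rho>")
  case True
  have "\<bar>\<mu> * t\<bar> \<le> \<bar>\<mu>\<bar> * sqrt \<rho>"
    using assms(2) by (simp add: abs_mult mult_left_mono)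
  moreover have "(real N - 3) * free_energy \<mu> \<rho> t
      \<le> (real N - 3) * (free_energy \<mu> \<rho> m - (t - m)\<^sup>2 / (2 * (\<rho> - m\<^sup>2)))"
    using free_energy_le_quadratic[OF assms(1) True] assms(3) unfolding \<mu>_def
    by (intro mult_left_mono) auto
  ultimately have "- 3 * \<mu> * t + (real N - 3) * free_energy \<mu> \<rho> t \<le> 3 * \<bar>\<mu>\<bar> * sqrt \<rho>
      + (real N - 3) * (free_energy \<mu> \<rho> m - (t - m)\<^sup>2 / (2 * (\<rho> - m\<^sup>2)))"
    by (simp add: abs_le_iff)
  also have "\<dots> = 3 * \<bar>\<mu>\<bar> * sqrt \<rho>
      + (real N - 3) * free_energy \<mu> \<rho> m + (- ((real N - 3) / (2 * (\<rho> - m\<^sup>2))) * (t - m)\<^sup>2)"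
    by (simp add: right_diff_distrib)
  finally show ?thesis
    unfolding canonical_weight_eq_exp_free_energy[OF True] by (simp flip: exp_add)
next
  case False
  then have "t\<^sup>2 = \<rho>"
    using assms(2) real_sqrt_le_iff[of "t\<^sup>2" \<rho>] by (simp add: abs_le_iff)
  then show ?thesis by (simp add: canonical_weight_def)
qed

lemma canonical_weight_ge:
  assumes "m\<^sup>2 < \<rho>" "\<bar>t\<bar> \<le> sqrt \<rho>" "N \<ge> 3" "\<bar>t - m\<bar> \<le> (\<rho> - m\<^sup>2) / (4 * sqrt \<rho>)"
  defines "\<mu> \<equiv> - m / (\<rho> - m\<^sup>2)" and "b \<equiv> 1 / (2 * (\<rho> - m\<^sup>2)) + 4 * \<rho> / (\<rho> - m\<^sup>2)\<^sup>2"
  shows "canonical_weight N \<mu> \<rho> t \<ge> exp (- 3 * \<bar>\<mu>\<bar> * sqrt \<rho>) * exp ((real N - 3) * free_energy \<mu> \<rho> m)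
           * exp (- (real N - 3) * b * (t - m)\<^sup>2)"
proof -
  note quadratic = free_energy_ge_quadratic[OF assms(1,2,4)]
  have "\<bar>\<mu> * t\<bar> \<le> \<bar>\<mu>\<bar> * sqrt \<rho>"
    using assms(2) by (simp add: abs_mult mult_left_mono)
  moreover have "(real N - 3) * free_energy \<mu> \<rho> t \<ge> (real N - 3) * (free_energy \<mu> \<rho> m - b * (t - m)\<^sup>2)"
    using quadratic(2) assms(3) unfolding \<mu>_def b_def by (intro mult_left_mono) auto
  ultimately have "- 3 * \<mu> * t + (real N - 3) * free_energy \<mu> \<rho> t \<ge> - 3 * \<bar>\<mu>\<bar> * sqrt \<rho>
      + (real N - 3) * free_energy \<mu> \<rho> m + (- (real N - 3) * b * (t - m)\<^sup>2)"
    by (simp add: algebra_simps abs_le_iff)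
  then show ?thesis
    unfolding canonical_weight_eq_exp_free_energy[OF quadratic(1)] by (simp flip: exp_add)
qed

lemma gaussian_first_moment_has_integral:
  fixes a m lo hi :: real
  assumes "a > 0" "lo \<le> hi"
  shows "((\<lambda>t. exp (- a * (t - m)\<^sup>2) * (t - m)) has_integral
           (exp (- a * (lo - m)\<^sup>2) - exp (- a * (hi - m)\<^sup>2)) / (2 * a)) {lo..hi}"
proof -
  have "((\<lambda>t. exp (- a * (t - m)\<^sup>2) * (t - m)) has_integral
     (- exp (- a * (hi - m)\<^sup>2) / (2 * a)) - (- exp (- a * (lo - m)\<^sup>2) / (2 * a))) {lo..hi}"
    apply (rule fundamental_theorem_of_calculus[OF assms(2)])
    apply (rule has_real_derivative_iff_has_vector_derivative[THEN iffD1])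
    apply (rule derivative_eq_intros refl | simp)+
    using assms(1) by (auto simp: field_simps)
  then show ?thesis by (simp add: diff_divide_distrib)
qed

lemma gaussian_abs_first_moment_le:
  fixes a m lo hi :: real
  assumes "a > 0" "lo \<le> m" "m \<le> hi"
  shows "(\<lambda>t. exp (- a * (t - m)\<^sup>2) * \<bar>t - m\<bar>) integrable_on {lo..hi}"
    and "integral {lo..hi} (\<lambda>t. exp (- a * (t - m)\<^sup>2) * \<bar>t - m\<bar>) \<le> 1 / a"
proof -
  have left: "((\<lambda>t. exp (- a * (t - m)\<^sup>2) * \<bar>t - m\<bar>) has_integral
      (1 - exp (- a * (lo - m)\<^sup>2)) / (2 * a)) {lo..m}"
  proof -
    have "((\<lambda>t. - (exp (- a * (t - m)\<^sup>2) * (t - m))) has_integral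
        (1 - exp (- a * (lo - m)\<^sup>2)) / (2 * a)) {lo..m}"
      using has_integral_neg[OF gaussian_first_moment_has_integral[OF assms(1,2), of m]]
      by (simp add: minus_divide_left)
    then show ?thesis by (rule has_integral_eq[rotated]) (auto simp: algebra_simps)
  qed
  have right: "((\<lambda>t. exp (- a * (t - m)\<^sup>2) * \<bar>t - m\<bar>) has_integral
      (1 - exp (- a * (hi - m)\<^sup>2)) / (2 * a)) {m..hi}"
  proof -
    have "((\<lambda>t. exp (- a * (t - m)\<^sup>2) * (t - m)) has_integral
        (1 - exp (- a * (hi - m)\<^sup>2)) / (2 * a)) {m..hi}"
      using gaussian_first_moment_has_integral[OF assms(1,3), of m] by simp
    then show ?thesis by (rule has_integral_eq[rotated]) auto
  qed
  note whole = has_integral_combine[OF assms(2,3) left right]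
  then show "(\<lambda>t. exp (- a * (t - m)\<^sup>2) * \<bar>t - m\<bar>) integrable_on {lo..hi}" by blast
  have "(1 - exp (- a * (lo - m)\<^sup>2)) / (2 * a) + (1 - exp (- a * (hi - m)\<^sup>2)) / (2 * a) \<le> 1 / a"
    using assms(1) by (simp add: field_simps add_nonneg_nonneg)
  then show "integral {lo..hi} (\<lambda>t. exp (- a * (t - m)\<^sup>2) * \<bar>t - m\<bar>) \<le> 1 / a"
    using integral_unique[OF whole] by simp
qed

lemma integral_canonical_weight_ge:
  assumes "m\<^sup>2 < \<rho>" "N \<ge> 4" "0 < \<eta>" "\<eta> \<le> sqrt \<rho> - \<bar>m\<bar>" "\<eta> \<le> (\<rho> - m\<^sup>2) / (4 * sqrt \<rho>)"
    and "(real N - 3) * \<eta>\<^sup>2 \<le> 1"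
  defines "\<mu> \<equiv> - m / (\<rho> - m\<^sup>2)" and "b \<equiv> 1 / (2 * (\<rho> - m\<^sup>2)) + 4 * \<rho> / (\<rho> - m\<^sup>2)\<^sup>2"
  shows "2 * \<eta> * (exp (- 3 * \<bar>\<mu>\<bar> * sqrt \<rho> - b) * exp ((real N - 3) * free_energy \<mu> \<rho> m))
           \<le> integral {- sqrt \<rho>..sqrt \<rho>} (canonical_weight N \<mu> \<rho>)"
proof -
  let ?I = "{- sqrt \<rho>..sqrt \<rho>}" and ?w = "canonical_weight N \<mu> \<rho>"
  define c where "c = exp (- 3 * \<bar>\<mu>\<bar> * sqrt \<rho> - b) * exp ((real N - 3) * free_energy \<mu> \<rho> m)"
  have b: "b \<ge> 0"
    using assms(1) power2_less_imp_pos[OF assms(1)] unfolding b_def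
    by (intro add_nonneg_nonneg divide_nonneg_nonneg) auto
  have window: "{m - \<eta>..m + \<eta>} \<subseteq> ?I" using assms(4) by auto
  have "?w integrable_on ?I"
    using continuous_on_canonical_weight[OF assms(2)] by (rule integrable_continuous_interval)
  then have integrable: "?w integrable_on {m - \<eta>..m + \<eta>}"
    using window by (rule integrable_on_subinterval)
  have "c \<le> ?w t" if t: "t \<in> {m - \<eta>..m + \<eta>}" for t
  proof -
    have "\<bar>t - m\<bar> \<le> \<eta>" using t by auto
    then have "(real N - 3) * b * (t - m)\<^sup>2 \<le> (real N - 3) * b * \<eta>\<^sup>2"
      using assms(2) b by (intro mult_left_mono) (auto simp: abs_le_square_iff[symmetric])
    also have "\<dots> \<le> b" using assms(6) b mult_left_mono[OF assms(6) b] by (simp add: algebra_simps)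
    finally have "exp (- b) \<le> exp (- (real N - 3) * b * (t - m)\<^sup>2)" by (simp add: algebra_simps)
    then have "c \<le> exp (- 3 * \<bar>\<mu>\<bar> * sqrt \<rho>) * exp ((real N - 3) * free_energy \<mu> \<rho> m)
        * exp (- (real N - 3) * b * (t - m)\<^sup>2)"
      unfolding c_def exp_diff by (simp add: exp_minus field_simps)
    also have "\<dots> \<le> ?w t"
      using canonical_weight_ge[OF assms(1) _ _ order_trans[OF \<open>\<bar>t - m\<bar> \<le> \<eta>\<close> assms(5)]]
        window t assms(2) unfolding \<mu>_def b_def by auto
    finally show ?thesis .
  qed
  then have "integral {m - \<eta>..m + \<eta>} (\<lambda>_. c) \<le> integral {m - \<eta>..m + \<eta>} ?w"
    using integrable by (intro integral_le) auto
  also have "\<dots> \<le> integral ?I ?w"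
    using window integrable \<open>?w integrable_on ?I\<close> canonical_weight_nonneg by (intro integral_subset_le) auto
  finally show ?thesis using assms(3) by (simp add: c_def mult_ac)
qed

lemma integral_canonical_weight_abs_dev_le:
  assumes "m\<^sup>2 < \<rho>" "N \<ge> 4"
  defines "\<mu> \<equiv> - m / (\<rho> - m\<^sup>2)"
  shows "(\<lambda>t. canonical_weight N \<mu> \<rho> t * \<bar>t - m\<bar>) integrable_on {- sqrt \<rho>..sqrt \<rho>}"
    and "integral {- sqrt \<rho>..sqrt \<rho>} (\<lambda>t. canonical_weight N \<mu> \<rho> t * \<bar>t - m\<bar>)
           \<le> exp (3 * \<bar>\<mu>\<bar> * sqrt \<rho>) * exp ((real N - 3) * free_energy \<mu> \<rho> m)
             * (2 * (\<rho> - m\<^sup>2) / (real N - 3))"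
proof -
  let ?I = "{- sqrt \<rho>..sqrt \<rho>}"
  define a where "a = (real N - 3) / (2 * (\<rho> - m\<^sup>2))"
  define K where "K = exp (3 * \<bar>\<mu>\<bar> * sqrt \<rho>) * exp ((real N - 3) * free_energy \<mu> \<rho> m)"
  have a: "a > 0" using assms(1,2) by (simp add: a_def)
  have "\<bar>m\<bar> \<le> sqrt \<rho>" using real_le_rsqrt[of "\<bar>m\<bar>" \<rho>] assms(1) by simp
  then have "- sqrt \<rho> \<le> m" "m \<le> sqrt \<rho>" by auto
  note gaussian = gaussian_abs_first_moment_le[OF a this]
  show integrable: "(\<lambda>t. canonical_weight N \<mu> \<rho> t * \<bar>t - m\<bar>) integrable_on ?I"
    by (intro integrable_continuous_interval continuous_intros continuous_on_canonical_weight assms(2))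
  have "canonical_weight N \<mu> \<rho> t * \<bar>t - m\<bar> \<le> K * (exp (- a * (t - m)\<^sup>2) * \<bar>t - m\<bar>)" if "t \<in> ?I" for t
    using mult_right_mono[OF canonical_weight_le[OF assms(1), of t N] abs_ge_zero] that assms(2)
    unfolding K_def a_def \<mu>_def by (auto simp: mult.assoc)
  then have "integral ?I (\<lambda>t. canonical_weight N \<mu> \<rho> t * \<bar>t - m\<bar>)
      \<le> integral ?I (\<lambda>t. K * (exp (- a * (t - m)\<^sup>2) * \<bar>t - m\<bar>))"
    using integrable integrable_on_cmult_left[OF gaussian(1), of K] by (intro integral_le) auto
  also have "\<dots> = K * integral ?I (\<lambda>t. exp (- a * (t - m)\<^sup>2) * \<bar>t - m\<bar>)"
    by simp
  also have "\<dots> \<le> K * (1 / a)"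
    using gaussian(2) by (intro mult_left_mono) (auto simp: K_def)
  finally show "integral ?I (\<lambda>t. canonical_weight N \<mu> \<rho> t * \<bar>t - m\<bar>)
      \<le> exp (3 * \<bar>\<mu>\<bar> * sqrt \<rho>) * exp ((real N - 3) * free_energy \<mu> \<rho> m) * (2 * (\<rho> - m\<^sup>2) / (real N - 3))"
    by (simp add: K_def a_def)
qed

lemma inverse_le_sqrt2_div_sqrt_mult:
  assumes "N \<ge> 6"
  shows "1 / (real N - 3) \<le> sqrt 2 / (sqrt (real N) * sqrt (real N - 3))"
proof -
  have "(real N - 3) * (real N - 6) \<ge> 0" using assms by (intro mult_nonneg_nonneg) auto
  then have "sqrt (real N * (real N - 3)) \<le> sqrt (2 * (real N - 3)\<^sup>2)"
    by (intro real_sqrt_le_mono) (simp add: power2_eq_square algebra_simps)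
  then have "sqrt (real N) * sqrt (real N - 3) \<le> sqrt 2 * (real N - 3)"
    using assms by (simp add: real_sqrt_mult)
  then show ?thesis using assms by (simp add: field_simps)
qed

lemma canonical_weight_abs_dev_bound:
  assumes "m\<^sup>2 < \<rho>"
  defines "\<mu> \<equiv> - m / (\<rho> - m\<^sup>2)"
  shows "\<exists>C. \<forall>\<^sub>F N in sequentially. 0 < integral {- sqrt \<rho>..sqrt \<rho>} (canonical_weight N \<mu> \<rho>)
           \<and> integral {- sqrt \<rho>..sqrt \<rho>} (\<lambda>t. canonical_weight N \<mu> \<rho> t * \<bar>t - m\<bar>)
               \<le> C / sqrt (real N) * integral {- sqrt \<rho>..sqrt \<rho>} (canonical_weight N \<mu> \<rho>)"
proof -
  let ?I = "{- sqrt \<rho>..sqrt \<rho>}"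
  define W where "W N = integral ?I (canonical_weight N \<mu> \<rho>)" for N
  define D where "D N = integral ?I (\<lambda>t. canonical_weight N \<mu> \<rho> t * \<bar>t - m\<bar>)" for N
  define v where "v = \<rho> - m\<^sup>2"
  define b where "b = 1 / (2 * (\<rho> - m\<^sup>2)) + 4 * \<rho> / (\<rho> - m\<^sup>2)\<^sup>2"
  define E where "E = exp (3 * \<bar>\<mu>\<bar> * sqrt \<rho>)"
  define c where "c = exp (- 3 * \<bar>\<mu>\<bar> * sqrt \<rho> - b)"
  define C where "C = sqrt 2 * v * E / c"
  define \<gamma> where "\<gamma> = min (sqrt \<rho> - \<bar>m\<bar>) (v / (4 * sqrt \<rho>))"
  have v: "v > 0" using assms(1) by (simp add: v_def)
  have "\<bar>m\<bar> < sqrt \<rho>" using real_less_rsqrt[of "\<bar>m\<bar>" \<rho>] assms(1) by simp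
  then have \<gamma>: "\<gamma> > 0" using v power2_less_imp_pos[OF assms(1)] by (simp add: \<gamma>_def)
  have bound: "0 < W N \<and> D N \<le> C / sqrt (real N) * W N" if N: "N \<ge> 6 \<and> real N - 3 \<ge> 1 / \<gamma>\<^sup>2" for N
  proof -
    define n where "n = real N - 3"
    define \<Phi> where "\<Phi> = exp (n * free_energy \<mu> \<rho> m)"
    have n: "n \<ge> 3" using N by (simp add: n_def)
    have "1 / \<gamma> \<le> sqrt n"
      using real_sqrt_le_mono[of "1 / \<gamma>\<^sup>2" n] N \<gamma> by (simp add: n_def real_sqrt_divide)
    then have \<eta>: "1 / sqrt n \<le> \<gamma>" using \<gamma> n by (simp add: field_simps)
    \<comment> \<open>The weight has Gaussian width \<open>1 / sqrt n\<close> around \<open>m\<close>: \<open>W N \<ge> \<Phi> / sqrt n\<close> but \<open>D N \<le> \<Phi> / n\<close>,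
      up to constants.\<close>
    have lower: "2 * (1 / sqrt n) * (c * \<Phi>) \<le> W N"
      using integral_canonical_weight_ge[OF assms(1), of N "1 / sqrt n"] \<eta> n N
      unfolding W_def c_def \<Phi>_def b_def \<mu>_def n_def \<gamma>_def v_def by (auto simp: power_divide)
    have upper: "D N \<le> E * \<Phi> * (2 * v / n)"
      using integral_canonical_weight_abs_dev_le(2)[OF assms(1), of N] N
      unfolding D_def E_def \<Phi>_def \<mu>_def n_def v_def by simp
    have "(2 * v * E * \<Phi>) * (1 / n) \<le> (2 * v * E * \<Phi>) * (sqrt 2 / (sqrt (real N) * sqrt n))"
      using v inverse_le_sqrt2_div_sqrt_mult[of N] N unfolding n_def
      by (intro mult_left_mono) (auto simp: E_def \<Phi>_def)
    then have "E * \<Phi> * (2 * v / n) \<le> (2 * v * E * \<Phi>) * (sqrt 2 / (sqrt (real N) * sqrt n))"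
      by (simp add: ac_simps)
    also have "\<dots> = C / sqrt (real N) * (2 * (1 / sqrt n) * (c * \<Phi>))"
      by (simp add: C_def c_def)
    also have "\<dots> \<le> C / sqrt (real N) * W N"
      using lower v by (intro mult_left_mono) (auto simp: C_def c_def E_def)
    finally have "D N \<le> C / sqrt (real N) * W N" using upper by linarith
    moreover have "0 < W N"
      using lower n by (smt (verit) c_def \<Phi>_def exp_gt_zero mult_pos_pos real_sqrt_gt_zero divide_pos_pos)
    ultimately show ?thesis by simp
  qed
  have "\<forall>\<^sub>F N in sequentially. N \<ge> 6 \<and> real N - 3 \<ge> 1 / \<gamma>\<^sup>2"
    by (intro eventually_conj eventually_ge_at_top) real_asymp
  then have "\<forall>\<^sub>F N in sequentially. 0 < W N \<and> D N \<le> C / sqrt (real N) * W N"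
    by (rule eventually_mono) (rule bound)
  then show ?thesis unfolding W_def D_def by blast
qed

lemma canonical_weight_concentration:
  assumes "m\<^sup>2 < \<rho>"
  defines "\<mu> \<equiv> - m / (\<rho> - m\<^sup>2)"
  shows "\<forall>\<^sub>F N in sequentially. 0 < integral {- sqrt \<rho>..sqrt \<rho>} (canonical_weight N \<mu> \<rho>)"
    and "(\<lambda>N. integral {- sqrt \<rho>..sqrt \<rho>} (\<lambda>t. canonical_weight N \<mu> \<rho> t * \<bar>t - m\<bar>)
              / integral {- sqrt \<rho>..sqrt \<rho>} (canonical_weight N \<mu> \<rho>)) \<in> O(\<lambda>N. 1 / sqrt (real N))"
proof -
  let ?I = "{- sqrt \<rho>..sqrt \<rho>}"
  define W where "W N = integral ?I (canonical_weight N \<mu> \<rho>)" for N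
  define D where "D N = integral ?I (\<lambda>t. canonical_weight N \<mu> \<rho> t * \<bar>t - m\<bar>)" for N
  obtain C where C: "\<forall>\<^sub>F N in sequentially. 0 < W N \<and> D N \<le> C / sqrt (real N) * W N"
    using canonical_weight_abs_dev_bound[OF assms(1)] unfolding W_def D_def \<mu>_def by blast
  then show "\<forall>\<^sub>F N in sequentially. 0 < W N"
    by (auto elim: eventually_mono)
  have "\<forall>\<^sub>F N in sequentially. norm (D N / W N) \<le> C * norm (1 / sqrt (real N))"
    using C eventually_ge_at_top[of 4]
  proof eventually_elim
    case (elim N)
    have "D N \<ge> 0"
      unfolding D_def using integral_canonical_weight_abs_dev_le(1)[OF assms(1)] elim
      by (intro integral_nonneg) (auto simp: \<mu>_def canonical_weight_nonneg)
    then show ?case using elim by (simp add: pos_divide_le_eq)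
  qed
  then show "(\<lambda>N. D N / W N) \<in> O(\<lambda>N. 1 / sqrt (real N))" by (rule bigoI)
qed

section \<open>Coordinates on the microcanonical sphere\<close>

definition gaussian_vector :: "nat \<Rightarrow> (nat \<Rightarrow> real) measure" where
  "gaussian_vector N = PiM {..<N} (\<lambda>_. std_gauss)"

definition sample_mean :: "nat \<Rightarrow> (nat \<Rightarrow> real) \<Rightarrow> real" where
  "sample_mean N g = (\<Sum>y<N. g y) / real N"

definition sphere_coord :: "nat \<Rightarrow> (nat \<Rightarrow> real) \<Rightarrow> nat \<Rightarrow> real" where
  "sphere_coord N g x = (g x - sample_mean N g) / sqrt (\<Sum>y<N. (g y - sample_mean N g)\<^sup>2)"

lemma mc_config_eq_sphere_coord:
  "x < N \<Longrightarrow> mc_config N a \<rho> g x = a + sqrt (real N) * sqrt (\<rho> - a\<^sup>2) * sphere_coord N g x"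
  unfolding mc_config_def sphere_coord_def sample_mean_def Let_def by (simp add: real_sqrt_mult)

lemma sum_sphere_coord_sq_le: "(\<Sum>x<N. (sphere_coord N g x)\<^sup>2) \<le> 1"
proof -
  define S where "S = (\<Sum>y<N. (g y - sample_mean N g)\<^sup>2)"
  have "S \<ge> 0" unfolding S_def by (intro sum_nonneg) auto
  have "(\<Sum>x<N. (sphere_coord N g x)\<^sup>2) = S / (sqrt S)\<^sup>2"
    by (simp add: S_def sphere_coord_def power_divide sum_divide_distrib)
  also have "\<dots> \<le> 1" using \<open>S \<ge> 0\<close> by (cases "S = 0") auto
  finally show ?thesis .
qed

lemma sphere_coord_sq_le: "x < N \<Longrightarrow> (sphere_coord N g x)\<^sup>2 \<le> 1"
  using member_le_sum[of x "{..<N}" "\<lambda>x. (sphere_coord N g x)\<^sup>2"] sum_sphere_coord_sq_le[of N g]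
  by auto

lemma abs_sphere_coord_le: "x < N \<Longrightarrow> \<bar>sphere_coord N g x\<bar> \<le> 1"
  using sphere_coord_sq_le by (simp add: abs_square_le_1)

lemma sphere_coord_permute:
  assumes "\<pi> permutes {..<N}" "x < N"
  shows "sphere_coord N (\<lambda>i\<in>{..<N}. g (\<pi> i)) x = sphere_coord N g (\<pi> x)"
proof -
  have sum_perm: "(\<Sum>y<N. h ((\<lambda>i\<in>{..<N}. g (\<pi> i)) y)) = (\<Sum>y<N. h (g y))" for h :: "real \<Rightarrow> real"
    using sum.permute[OF assms(1), of "\<lambda>y. h (g y)"] by (simp add: comp_def)
  have "sample_mean N (\<lambda>i\<in>{..<N}. g (\<pi> i)) = sample_mean N g"
    using sum_perm[of "\<lambda>r. r"] by (simp add: sample_mean_def)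
  then show ?thesis
    using assms sum_perm[of "\<lambda>r. (r - sample_mean N g)\<^sup>2"] by (simp add: sphere_coord_def)
qed

lemma prob_space_std_gauss: "prob_space std_gauss"
  unfolding std_gauss_def by (rule prob_space_normal_density) simp

lemma prob_space_gaussian_vector: "prob_space (gaussian_vector N)"
  unfolding gaussian_vector_def by (intro prob_space_PiM prob_space_std_gauss)

lemma gaussian_vector_permute:
  assumes "\<pi> permutes {..<N}"
  shows "distr (gaussian_vector N) (gaussian_vector N) (\<lambda>g. \<lambda>i\<in>{..<N}. g (\<pi> i)) = gaussian_vector N"
  unfolding gaussian_vector_def
  using distr_PiM_reindex[of "{..<N}" "\<lambda>_. std_gauss" \<pi> "{..<N}"] prob_space_std_gauss
    permutes_inj_on[OF assms] permutes_in_image[OF assms] by auto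

lemma measurable_component_gaussian_vector:
  "y < N \<Longrightarrow> (\<lambda>g. g y) \<in> borel_measurable (gaussian_vector N)"
  unfolding gaussian_vector_def
  by (simp add: std_gauss_def measurable_cong_sets[OF refl sets_density] measurable_component_singleton)

lemma measurable_sample_mean: "sample_mean N \<in> borel_measurable (gaussian_vector N)"
  unfolding sample_mean_def
  by (intro borel_measurable_divide borel_measurable_sum measurable_component_gaussian_vector) auto

lemma measurable_sphere_coord:
  assumes "x < N"
  shows "(\<lambda>g. sphere_coord N g x) \<in> borel_measurable (gaussian_vector N)"
proof -
  have "(\<lambda>g. \<Sum>y<N. (g y - sample_mean N g)\<^sup>2) \<in> borel_measurable (gaussian_vector N)"
    by (intro borel_measurable_sum borel_measurable_power borel_measurable_diff
        measurable_component_gaussian_vector measurable_sample_mean) auto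
  from measurable_compose[OF this borel_measurable_sqrt] show ?thesis
    unfolding sphere_coord_def using assms
    by (intro borel_measurable_divide borel_measurable_diff measurable_component_gaussian_vector
        measurable_sample_mean) (auto simp: comp_def)
qed

lemma integrable_gaussian_vector_bounded:
  fixes F :: "(nat \<Rightarrow> real) \<Rightarrow> real"
  assumes "F \<in> borel_measurable (gaussian_vector N)" "\<And>g. \<bar>F g\<bar> \<le> B"
  shows "integrable (gaussian_vector N) F"
proof -
  interpret prob_space "gaussian_vector N" by (rule prob_space_gaussian_vector)
  show ?thesis using assms by (intro integrable_const_bound[where B = B]) auto
qed

lemma integrable_sphere_coord_sq:
  "x < N \<Longrightarrow> integrable (gaussian_vector N) (\<lambda>g. (sphere_coord N g x)\<^sup>2)"
  by (rule integrable_gaussian_vector_bounded[where B = 1])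
     (auto intro: borel_measurable_power measurable_sphere_coord sphere_coord_sq_le)

lemma integrable_abs_sphere_coord:
  "x < N \<Longrightarrow> integrable (gaussian_vector N) (\<lambda>g. \<bar>sphere_coord N g x\<bar>)"
  by (rule integrable_gaussian_vector_bounded[where B = 1])
     (auto intro: borel_measurable_abs measurable_sphere_coord abs_sphere_coord_le)

lemma expectation_sphere_coord_sq_exchangeable:
  assumes "x < N" "y < N"
  shows "integral\<^sup>L (gaussian_vector N) (\<lambda>g. (sphere_coord N g x)\<^sup>2)
       = integral\<^sup>L (gaussian_vector N) (\<lambda>g. (sphere_coord N g y)\<^sup>2)"
proof -
  have \<pi>: "Transposition.transpose x y permutes {..<N}" using assms by (intro permutes_swap_id) auto
  let ?T = "\<lambda>g. \<lambda>i\<in>{..<N}. g (Transposition.transpose x y i)"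
  have "?T \<in> measurable (gaussian_vector N) (gaussian_vector N)"
    unfolding gaussian_vector_def using permutes_in_image[OF \<pi>]
    by (intro measurable_restrict measurable_component_singleton) auto
  then have "integral\<^sup>L (gaussian_vector N) (\<lambda>g. (sphere_coord N g x)\<^sup>2)
      = integral\<^sup>L (gaussian_vector N) (\<lambda>g. (sphere_coord N (?T g) x)\<^sup>2)"
    using integral_distr[of ?T "gaussian_vector N" "gaussian_vector N" "\<lambda>g. (sphere_coord N g x)\<^sup>2"]
      gaussian_vector_permute[OF \<pi>] assms(1)
    by (simp add: borel_measurable_power measurable_sphere_coord)
  also have "\<dots> = integral\<^sup>L (gaussian_vector N) (\<lambda>g. (sphere_coord N g y)\<^sup>2)"
    using sphere_coord_permute[OF \<pi> assms(1)] by simp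
  finally show ?thesis .
qed

lemma expectation_sphere_coord_sq_le:
  assumes "x < N"
  shows "integral\<^sup>L (gaussian_vector N) (\<lambda>g. (sphere_coord N g x)\<^sup>2) \<le> 1 / real N"
proof -
  interpret prob_space "gaussian_vector N" by (rule prob_space_gaussian_vector)
  have "real N * integral\<^sup>L (gaussian_vector N) (\<lambda>g. (sphere_coord N g x)\<^sup>2)
      = (\<Sum>y<N. integral\<^sup>L (gaussian_vector N) (\<lambda>g. (sphere_coord N g x)\<^sup>2))"
    by simp
  also have "\<dots> = (\<Sum>y<N. integral\<^sup>L (gaussian_vector N) (\<lambda>g. (sphere_coord N g y)\<^sup>2))"
    using expectation_sphere_coord_sq_exchangeable[OF assms] by (intro sum.cong) auto
  also have "\<dots> = integral\<^sup>L (gaussian_vector N) (\<lambda>g. \<Sum>y<N. (sphere_coord N g y)\<^sup>2)"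
    using integrable_sphere_coord_sq by (intro Bochner_Integration.integral_sum[symmetric]) auto
  also have "\<dots> \<le> integral\<^sup>L (gaussian_vector N) (\<lambda>g. 1)"
    using integrable_sphere_coord_sq sum_sphere_coord_sq_le
    by (intro integral_mono Bochner_Integration.integrable_sum) auto
  finally show ?thesis using assms by (simp add: prob_space field_simps)
qed

lemma expectation_abs_sphere_coord_le:
  assumes "x < N"
  shows "integral\<^sup>L (gaussian_vector N) (\<lambda>g. \<bar>sphere_coord N g x\<bar>) \<le> 1 / sqrt (real N)"
proof -
  interpret prob_space "gaussian_vector N" by (rule prob_space_gaussian_vector)
  define s where "s = sqrt (real N)"
  have s: "s > 0" using assms by (simp add: s_def)
  have am_gm: "\<bar>u\<bar> \<le> (s * u\<^sup>2 + 1 / s) / 2" for u :: real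
  proof -
    have "0 \<le> (s * \<bar>u\<bar> - 1)\<^sup>2 / s" using s by simp
    also have "\<dots> = s * u\<^sup>2 - 2 * \<bar>u\<bar> + 1 / s"
      using s by (simp add: power2_eq_square field_simps)
    finally show ?thesis by simp
  qed
  have "integral\<^sup>L (gaussian_vector N) (\<lambda>g. \<bar>sphere_coord N g x\<bar>)
      \<le> integral\<^sup>L (gaussian_vector N) (\<lambda>g. (s * (sphere_coord N g x)\<^sup>2 + 1 / s) / 2)"
    using integrable_abs_sphere_coord[OF assms] integrable_sphere_coord_sq[OF assms] am_gm
    by (intro integral_mono) auto
  also have "\<dots> = (s * integral\<^sup>L (gaussian_vector N) (\<lambda>g. (sphere_coord N g x)\<^sup>2) + 1 / s) / 2"
    using integrable_sphere_coord_sq[OF assms] by (simp add: prob_space)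
  also have "\<dots> \<le> (s * (1 / real N) + 1 / s) / 2"
    using expectation_sphere_coord_sq_le[OF assms] s by (intro divide_right_mono add_right_mono mult_left_mono) auto
  also have "s * (1 / real N) = 1 / s" using s by (simp add: s_def field_simps)
  finally show ?thesis by (simp add: s_def)
qed

lemma mc_expect_eq: "mc_expect N a \<rho> F = integral\<^sup>L (gaussian_vector N) (\<lambda>g. F (mc_config N a \<rho> g))"
  by (simp add: mc_expect_def gaussian_vector_def)

lemma abs_mc_expect_le:
  assumes "\<And>\<phi>. \<bar>F \<phi>\<bar> \<le> B"
  shows "\<bar>mc_expect N a \<rho> F\<bar> \<le> B"
proof (cases "integrable (gaussian_vector N) (\<lambda>g. F (mc_config N a \<rho> g))")
  case True
  interpret prob_space "gaussian_vector N" by (rule prob_space_gaussian_vector)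
  have "\<bar>mc_expect N a \<rho> F\<bar> \<le> integral\<^sup>L (gaussian_vector N) (\<lambda>g. \<bar>F (mc_config N a \<rho> g)\<bar>)"
    unfolding mc_expect_eq by (rule integral_abs_bound)
  also have "\<dots> \<le> integral\<^sup>L (gaussian_vector N) (\<lambda>_. B)"
    using True assms by (intro integral_mono) auto
  finally show ?thesis by (simp add: prob_space)
next
  case False
  then show ?thesis
    using assms[of undefined] by (simp add: mc_expect_eq not_integrable_integral_eq)
qed

lemma proj_mc_config_component:
  "\<forall>i. idx i < N \<Longrightarrow>
     proj idx (mc_config N a \<rho> g) $ k = a + sqrt (real N) * sqrt (\<rho> - a\<^sup>2) * sphere_coord N g (idx k)"
  by (simp add: proj_def mc_config_eq_sphere_coord)

lemma measurable_mc_observable: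
  fixes idx :: "'k::finite \<Rightarrow> nat" and f :: "real ^ 'k \<Rightarrow> real"
  assumes "\<forall>i. idx i < N" "continuous_on UNIV f"
  shows "(\<lambda>g. f (proj idx (mc_config N a \<rho> g))) \<in> borel_measurable (gaussian_vector N)"
proof -
  have "(\<lambda>g. proj idx (mc_config N a \<rho> g) \<bullet> axis k 1) \<in> borel_measurable (gaussian_vector N)" for k
    using assms(1) unfolding inner_axis real_inner_1_right proj_mc_config_component[OF assms(1)]
    by (intro borel_measurable_times borel_measurable_add measurable_sphere_coord) auto
  moreover have "i \<in> Basis \<Longrightarrow> \<exists>k. i = axis k (1 :: real)" for i :: "real ^ 'k"
    by (auto simp: Basis_vec_def)
  ultimately have "(\<lambda>g. proj idx (mc_config N a \<rho> g)) \<in> borel_measurable (gaussian_vector N)"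
    unfolding borel_measurable_euclidean_space[where 'c = "real ^ 'k"] by metis
  then show ?thesis
    by (rule measurable_compose[OF _ borel_measurable_continuous_onI[OF assms(2)]])
qed

lemma dist_proj_mc_config_le:
  fixes idx :: "'k::finite \<Rightarrow> nat"
  assumes "\<forall>i. idx i < N"
  shows "dist (proj idx (mc_config N a \<rho> g)) (proj idx (mc_config N b \<rho> g))
    \<le> (\<Sum>k\<in>UNIV. \<bar>a - b\<bar> + sqrt (real N) * \<bar>sqrt (\<rho> - a\<^sup>2) - sqrt (\<rho> - b\<^sup>2)\<bar> * \<bar>sphere_coord N g (idx k)\<bar>)"
proof -
  have "dist (proj idx (mc_config N a \<rho> g)) (proj idx (mc_config N b \<rho> g))
      \<le> (\<Sum>k\<in>UNIV. \<bar>(proj idx (mc_config N a \<rho> g) - proj idx (mc_config N b \<rho> g)) $ k\<bar>)"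
    unfolding dist_norm by (rule norm_le_l1_cart)
  also have "\<dots> \<le> (\<Sum>k\<in>UNIV. \<bar>a - b\<bar>
      + sqrt (real N) * \<bar>sqrt (\<rho> - a\<^sup>2) - sqrt (\<rho> - b\<^sup>2)\<bar> * \<bar>sphere_coord N g (idx k)\<bar>)"
  proof (rule sum_mono)
    fix k
    have "(proj idx (mc_config N a \<rho> g) - proj idx (mc_config N b \<rho> g)) $ k
        = (a - b) + sqrt (real N) * (sqrt (\<rho> - a\<^sup>2) - sqrt (\<rho> - b\<^sup>2)) * sphere_coord N g (idx k)"
      using assms by (simp add: proj_mc_config_component algebra_simps)
    then show "\<bar>(proj idx (mc_config N a \<rho> g) - proj idx (mc_config N b \<rho> g)) $ k\<bar>
        \<le> \<bar>a - b\<bar> + sqrt (real N) * \<bar>sqrt (\<rho> - a\<^sup>2) - sqrt (\<rho> - b\<^sup>2)\<bar> * \<bar>sphere_coord N g (idx k)\<bar>"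
      by (simp add: abs_mult abs_triangle_ineq[THEN order_trans])
  qed
  finally show ?thesis .
qed

lemma mc_expect_lipschitz:
  fixes idx :: "'k::finite \<Rightarrow> nat" and f :: "real ^ 'k \<Rightarrow> real"
  assumes "N > 0" "\<forall>i. idx i < N" "L-lipschitz_on UNIV f" "\<And>x. \<bar>f x\<bar> \<le> B"
  shows "\<bar>mc_expect N a \<rho> (f \<circ> proj idx) - mc_expect N b \<rho> (f \<circ> proj idx)\<bar>
     \<le> L * CARD('k) * (\<bar>a - b\<bar> + \<bar>sqrt (\<rho> - a\<^sup>2) - sqrt (\<rho> - b\<^sup>2)\<bar>)"
proof -
  interpret prob_space "gaussian_vector N" by (rule prob_space_gaussian_vector)
  define X where "X c = (\<lambda>g. f (proj idx (mc_config N c \<rho> g)))" for c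
  define d where "d = sqrt (real N) * \<bar>sqrt (\<rho> - a\<^sup>2) - sqrt (\<rho> - b\<^sup>2)\<bar>"
  define Y where "Y g = (\<Sum>k\<in>UNIV. \<bar>a - b\<bar> + d * \<bar>sphere_coord N g (idx k)\<bar>)" for g
  have L: "L \<ge> 0" using assms(3) by (rule lipschitz_on_nonneg)
  have integrable_X: "integrable (gaussian_vector N) (X c)" for c
    unfolding X_def using assms(2,4) lipschitz_on_continuous_on[OF assms(3)]
    by (intro integrable_gaussian_vector_bounded[where B = B] measurable_mc_observable) auto
  have integrable_Y: "integrable (gaussian_vector N) Y"
    unfolding Y_def using integrable_abs_sphere_coord assms(2) by auto
  have pointwise: "\<bar>X a g - X b g\<bar> \<le> L * Y g" for g
  proof -
    have "\<bar>X a g - X b g\<bar> \<le> L * dist (proj idx (mc_config N a \<rho> g)) (proj idx (mc_config N b \<rho> g))"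
      unfolding X_def using lipschitz_onD[OF assms(3)] by (simp add: dist_real_def)
    also have "\<dots> \<le> L * Y g"
      using dist_proj_mc_config_le[OF assms(2)] L unfolding Y_def d_def
      by (intro mult_left_mono) (auto simp: mult.assoc)
    finally show ?thesis .
  qed
  have "mc_expect N a \<rho> (f \<circ> proj idx) - mc_expect N b \<rho> (f \<circ> proj idx)
      = integral\<^sup>L (gaussian_vector N) (\<lambda>g. X a g - X b g)"
    unfolding mc_expect_eq using Bochner_Integration.integral_diff[OF integrable_X integrable_X, of a b]
    by (simp add: X_def)
  also have "\<bar>\<dots>\<bar> \<le> integral\<^sup>L (gaussian_vector N) (\<lambda>g. \<bar>X a g - X b g\<bar>)"
    by (rule integral_abs_bound)
  also have "\<dots> \<le> integral\<^sup>L (gaussian_vector N) (\<lambda>g. L * Y g)"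
    using integrable_X integrable_Y pointwise by (intro integral_mono) auto
  also have "\<dots> = L * (\<Sum>k\<in>UNIV. \<bar>a - b\<bar> + d * integral\<^sup>L (gaussian_vector N) (\<lambda>g. \<bar>sphere_coord N g (idx k)\<bar>))"
    unfolding Y_def using integrable_abs_sphere_coord assms(2) by (simp add: prob_space)
  also have "\<dots> \<le> L * (\<Sum>k\<in>(UNIV :: 'k set). \<bar>a - b\<bar> + d * (1 / sqrt (real N)))"
    using expectation_abs_sphere_coord_le assms(2) L
    by (intro mult_left_mono sum_mono add_left_mono) (auto simp: d_def)
  also have "\<dots> = L * CARD('k) * (\<bar>a - b\<bar> + \<bar>sqrt (\<rho> - a\<^sup>2) - sqrt (\<rho> - b\<^sup>2)\<bar>)"
    using assms(1) by (simp add: d_def)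
  finally show ?thesis .
qed

lemma continuous_on_mc_expect:
  fixes idx :: "'k::finite \<Rightarrow> nat" and f :: "real ^ 'k \<Rightarrow> real"
  assumes "N > 0" "\<forall>i. idx i < N" "L-lipschitz_on UNIV f" "\<And>x. \<bar>f x\<bar> \<le> B"
  shows "continuous_on S (\<lambda>a. mc_expect N a \<rho> (f \<circ> proj idx))"
  unfolding continuous_on_def
proof
  fix a assume "a \<in> S"
  let ?A = "\<lambda>t. mc_expect N t \<rho> (f \<circ> proj idx)"
  let ?bound = "\<lambda>t. L * CARD('k) * (\<bar>t - a\<bar> + \<bar>sqrt (\<rho> - t\<^sup>2) - sqrt (\<rho> - a\<^sup>2)\<bar>)"
  have "((\<lambda>t. ?A t - ?A a) \<longlongrightarrow> 0) (at a within S)"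
  proof (rule Lim_null_comparison)
    show "\<forall>\<^sub>F t in at a within S. norm (?A t - ?A a) \<le> ?bound t"
      using mc_expect_lipschitz[OF assms] by (intro always_eventually) simp
    have "(?bound \<longlongrightarrow> ?bound a) (at a within S)"
      by (intro tendsto_intros)
    then show "(?bound \<longlongrightarrow> 0) (at a within S)" by simp
  qed
  then show "(?A \<longlongrightarrow> ?A a) (at a within S)" by (simp add: LIM_zero_iff)
qed

section \<open>Canonical versus microcanonical expectations\<close>

lemma abs_sqrt_diff_le:
  fixes a b :: real
  assumes "a \<ge> 0" "b > 0"
  shows "\<bar>sqrt a - sqrt b\<bar> \<le> \<bar>a - b\<bar> / sqrt b"
proof -
  have "a - b = (sqrt a - sqrt b) * (sqrt a + sqrt b)"
    using assms by (simp add: algebra_simps)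
  then have "\<bar>a - b\<bar> = \<bar>sqrt a - sqrt b\<bar> * (sqrt a + sqrt b)"
    using assms by (simp add: abs_mult)
  also have "\<dots> \<ge> \<bar>sqrt a - sqrt b\<bar> * sqrt b" using assms by (intro mult_left_mono) auto
  finally show ?thesis using assms by (simp add: field_simps)
qed

lemma abs_sqrt_radius_diff_le:
  fixes m t \<rho> :: real
  assumes "m\<^sup>2 < \<rho>" "\<bar>t\<bar> \<le> sqrt \<rho>"
  shows "\<bar>sqrt (\<rho> - t\<^sup>2) - sqrt (\<rho> - m\<^sup>2)\<bar> \<le> 2 * sqrt \<rho> / sqrt (\<rho> - m\<^sup>2) * \<bar>t - m\<bar>"
proof -
  have m: "\<bar>m\<bar> \<le> sqrt \<rho>" using real_le_rsqrt[of "\<bar>m\<bar>" \<rho>] assms(1) by simp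
  have t: "\<rho> - t\<^sup>2 \<ge> 0" using assms(2) real_sqrt_le_iff[of "t\<^sup>2" \<rho>] m by simp
  have "\<bar>(\<rho> - t\<^sup>2) - (\<rho> - m\<^sup>2)\<bar> \<le> 2 * sqrt \<rho> * \<bar>t - m\<bar>"
    using abs_power2_diff_le[OF assms(2) m] by (simp add: abs_minus_commute)
  then have "\<bar>(\<rho> - t\<^sup>2) - (\<rho> - m\<^sup>2)\<bar> / sqrt (\<rho> - m\<^sup>2) \<le> 2 * sqrt \<rho> / sqrt (\<rho> - m\<^sup>2) * \<bar>t - m\<bar>"
    using assms(1) by (simp add: divide_right_mono)
  with abs_sqrt_diff_le[OF t, of "\<rho> - m\<^sup>2"] assms(1) show ?thesis by simp
qed

lemma mc_expect_lipschitz_at: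
  fixes idx :: "'k::finite \<Rightarrow> nat" and f :: "real ^ 'k \<Rightarrow> real"
  assumes "N > 0" "\<forall>i. idx i < N" "L-lipschitz_on UNIV f" "\<And>x. \<bar>f x\<bar> \<le> B"
    and "m\<^sup>2 < \<rho>" "\<bar>t\<bar> \<le> sqrt \<rho>"
  shows "\<bar>mc_expect N t \<rho> (f \<circ> proj idx) - mc_expect N m \<rho> (f \<circ> proj idx)\<bar>
           \<le> L * CARD('k) * (1 + 2 * sqrt \<rho> / sqrt (\<rho> - m\<^sup>2)) * \<bar>t - m\<bar>"
proof -
  have "\<bar>mc_expect N t \<rho> (f \<circ> proj idx) - mc_expect N m \<rho> (f \<circ> proj idx)\<bar>
      \<le> L * CARD('k) * (\<bar>t - m\<bar> + \<bar>sqrt (\<rho> - t\<^sup>2) - sqrt (\<rho> - m\<^sup>2)\<bar>)"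
    by (rule mc_expect_lipschitz[OF assms(1-4)])
  also have "\<dots> \<le> L * CARD('k) * ((1 + 2 * sqrt \<rho> / sqrt (\<rho> - m\<^sup>2)) * \<bar>t - m\<bar>)"
    using abs_sqrt_radius_diff_le[OF assms(5,6)] lipschitz_on_nonneg[OF assms(3)]
    by (intro mult_left_mono) (auto simp: distrib_right)
  finally show ?thesis by (simp only: mult.assoc)
qed

lemma weighted_mean_dev_le:
  fixes w A :: "real \<Rightarrow> real"
  assumes "w integrable_on S" "(\<lambda>t. w t * A t) integrable_on S" "(\<lambda>t. w t * \<bar>t - m\<bar>) integrable_on S"
    and "0 < integral S w" "\<And>t. t \<in> S \<Longrightarrow> 0 \<le> w t" "\<And>t. t \<in> S \<Longrightarrow> \<bar>A t - A m\<bar> \<le> K * \<bar>t - m\<bar>"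
  shows "\<bar>integral S (\<lambda>t. w t * A t) / integral S w - A m\<bar>
           \<le> K * (integral S (\<lambda>t. w t * \<bar>t - m\<bar>) / integral S w)"
proof -
  have integrable_dev: "(\<lambda>t. w t * A t - w t * A m) integrable_on S"
    using assms(1,2) by (intro integrable_diff integrable_on_mult_left)
  have "integral S (\<lambda>t. w t * A t - w t * A m) = integral S (\<lambda>t. w t * A t) - integral S w * A m"
    using assms(1,2) by (simp add: integral_diff integrable_on_mult_left)
  then have "integral S (\<lambda>t. w t * A t) / integral S w - A m
      = integral S (\<lambda>t. w t * A t - w t * A m) / integral S w"
    using assms(4) by (simp add: diff_divide_distrib)
  also have "\<bar>\<dots>\<bar> \<le> integral S (\<lambda>t. K * (w t * \<bar>t - m\<bar>)) / integral S w"
  proof -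
    have "norm (integral S (\<lambda>t. w t * A t - w t * A m)) \<le> integral S (\<lambda>t. K * (w t * \<bar>t - m\<bar>))"
    proof (rule integral_norm_bound_integral[OF integrable_dev])
      show "(\<lambda>t. K * (w t * \<bar>t - m\<bar>)) integrable_on S"
        using assms(3) by (rule integrable_on_mult_right)
      fix t assume t: "t \<in> S"
      have "norm (w t * A t - w t * A m) = w t * \<bar>A t - A m\<bar>"
        using assms(5)[OF t] by (simp add: abs_mult flip: right_diff_distrib)
      also have "\<dots> \<le> w t * (K * \<bar>t - m\<bar>)"
        using assms(5,6) t by (intro mult_left_mono) auto
      finally show "norm (w t * A t - w t * A m) \<le> K * (w t * \<bar>t - m\<bar>)"
        by (simp add: ac_simps)
    qed
    then show ?thesis using assms(4) by (simp add: abs_div divide_right_mono)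
  qed
  finally show ?thesis by simp
qed

lemma c_expect_dev_le:
  fixes idx :: "'k::finite \<Rightarrow> nat" and f :: "real ^ 'k \<Rightarrow> real"
  assumes "m\<^sup>2 < \<rho>" "L-lipschitz_on UNIV f" "\<And>x. \<bar>f x\<bar> \<le> B"
    and "N \<ge> 4" "\<forall>i. idx i < N" "0 < integral {- sqrt \<rho>..sqrt \<rho>} (canonical_weight N \<mu> \<rho>)"
  shows "\<bar>c_expect N \<mu> \<rho> (f \<circ> proj idx) - mc_expect N m \<rho> (f \<circ> proj idx)\<bar>
           \<le> L * CARD('k) * (1 + 2 * sqrt \<rho> / sqrt (\<rho> - m\<^sup>2))
             * (integral {- sqrt \<rho>..sqrt \<rho>} (\<lambda>t. canonical_weight N \<mu> \<rho> t * \<bar>t - m\<bar>)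
                / integral {- sqrt \<rho>..sqrt \<rho>} (canonical_weight N \<mu> \<rho>))"
  unfolding c_expect_eq_weighted_mean
proof (rule weighted_mean_dev_le)
  let ?I = "{- sqrt \<rho>..sqrt \<rho>}"
  have "continuous_on ?I (\<lambda>t. mc_expect N t \<rho> (f \<circ> proj idx))"
    using continuous_on_mc_expect[OF _ assms(5,2,3)] assms(4) by simp
  moreover have "continuous_on ?I (canonical_weight N \<mu> \<rho>)"
    using continuous_on_canonical_weight assms(4) by simp
  ultimately show "canonical_weight N \<mu> \<rho> integrable_on ?I"
    and "(\<lambda>t. canonical_weight N \<mu> \<rho> t * mc_expect N t \<rho> (f \<circ> proj idx)) integrable_on ?I"
    and "(\<lambda>t. canonical_weight N \<mu> \<rho> t * \<bar>t - m\<bar>) integrable_on ?I"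
    by (auto intro!: integrable_continuous_interval continuous_intros)
  show "\<bar>mc_expect N t \<rho> (f \<circ> proj idx) - mc_expect N m \<rho> (f \<circ> proj idx)\<bar>
      \<le> L * CARD('k) * (1 + 2 * sqrt \<rho> / sqrt (\<rho> - m\<^sup>2)) * \<bar>t - m\<bar>" if "t \<in> ?I" for t
    using mc_expect_lipschitz_at[OF _ assms(5,2,3,1)] that assms(4) by auto
qed (use assms(6) canonical_weight_nonneg in auto)

lemma c_expect_near_mc_expect:
  fixes idx :: "'k::finite \<Rightarrow> nat" and f :: "real ^ 'k \<Rightarrow> real"
  assumes "m\<^sup>2 < \<rho>" "L-lipschitz_on UNIV f" "\<And>x. \<bar>f x\<bar> \<le> B"
  defines "\<mu> \<equiv> - m / (\<rho> - m\<^sup>2)"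
  shows "(\<lambda>N. c_expect N \<mu> \<rho> (f \<circ> proj idx) - mc_expect N m \<rho> (f \<circ> proj idx)) \<in> O(\<lambda>N. 1 / sqrt (real N))"
proof -
  let ?I = "{- sqrt \<rho>..sqrt \<rho>}"
  define R where "R N = integral ?I (\<lambda>t. canonical_weight N \<mu> \<rho> t * \<bar>t - m\<bar>)
                        / integral ?I (canonical_weight N \<mu> \<rho>)" for N
  define K where "K = L * CARD('k) * (1 + 2 * sqrt \<rho> / sqrt (\<rho> - m\<^sup>2))"
  have K: "K \<ge> 0"
    using lipschitz_on_nonneg[OF assms(2)] power2_less_imp_pos[OF assms(1)] assms(1) unfolding K_def
    by (intro mult_nonneg_nonneg add_nonneg_nonneg divide_nonneg_nonneg) auto
  have "\<forall>\<^sub>F N in sequentially. N \<ge> 4 \<and> N > Max (range idx) \<and> 0 < integral ?I (canonical_weight N \<mu> \<rho>)"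
    using canonical_weight_concentration(1)[OF assms(1)] unfolding \<mu>_def
    by (intro eventually_conj eventually_ge_at_top eventually_gt_at_top)
  then have "\<forall>\<^sub>F N in sequentially.
      norm (c_expect N \<mu> \<rho> (f \<circ> proj idx) - mc_expect N m \<rho> (f \<circ> proj idx)) \<le> K * norm (R N)"
  proof eventually_elim
    case (elim N)
    then have "\<forall>i. idx i < N" using Max_ge[of "range idx"] by (auto intro: le_less_trans)
    then have "\<bar>c_expect N \<mu> \<rho> (f \<circ> proj idx) - mc_expect N m \<rho> (f \<circ> proj idx)\<bar> \<le> K * R N"
      using c_expect_dev_le[OF assms(1-3), of N idx \<mu>] elim unfolding K_def R_def by auto
    also have "\<dots> \<le> K * norm (R N)" using K by (intro mult_left_mono) auto
    finally show ?case by simp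
  qed
  then have "(\<lambda>N. c_expect N \<mu> \<rho> (f \<circ> proj idx) - mc_expect N m \<rho> (f \<circ> proj idx)) \<in> O(R)"
    by (rule bigoI)
  also have "R \<in> O(\<lambda>N. 1 / sqrt (real N))"
    using canonical_weight_concentration(2)[OF assms(1)] unfolding R_def \<mu>_def .
  finally show ?thesis .
qed

section \<open>The fixed energy ensemble\<close>

lemma energy_set_root_sq_less:
  assumes "J > 0" "h \<noteq> 0" "\<epsilon> \<in> energy_set J h \<rho>"
  defines "m \<equiv> - h / J + sgn h * sqrt (h\<^sup>2 / J\<^sup>2 - 2 * \<epsilon> / J)"
  shows "m\<^sup>2 < \<rho>"
proof -
  define s where "s = sqrt (h\<^sup>2 / J\<^sup>2 - 2 * \<epsilon> / J)"
  have "\<bar>m\<bar> = \<bar>\<bar>h\<bar> / J - s\<bar>"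
    using assms(2) by (cases "h > 0") (auto simp: m_def s_def abs_minus_commute)
  also have "\<dots> < sqrt \<rho>" using assms(3) by (simp add: energy_set_def s_def)
  finally have "sqrt (m\<^sup>2) < sqrt \<rho>" by simp
  then show ?thesis by (simp only: real_sqrt_less_iff)
qed

lemma abs_root_less_other_root:
  fixes J h \<epsilon> :: real
  assumes "J > 0" "h \<noteq> 0" "\<epsilon> < h\<^sup>2 / (2 * J)"
  defines "s \<equiv> sqrt (h\<^sup>2 / J\<^sup>2 - 2 * \<epsilon> / J)"
  shows "\<bar>- h / J + sgn h * s\<bar> < \<bar>- h / J - sgn h * s\<bar>"
proof -
  have "s > 0" using assms(1,3) by (simp add: s_def field_simps power2_eq_square)
  show ?thesis
  proof (cases "h > 0")
    case True
    then have "h / J > 0" using assms(1) by simp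
    then show ?thesis using True \<open>s > 0\<close> by (simp add: abs_if)
  next
    case False
    then have "h < 0" using assms(2) by simp
    then have "h / J < 0" using assms(1) by (simp add: divide_neg_pos)
    then show ?thesis using \<open>h < 0\<close> \<open>s > 0\<close> by (simp add: abs_if)
  qed
qed

lemma fe_expect_cases:
  assumes "J > 0" "h \<noteq> 0" "\<epsilon> \<in> energy_set J h \<rho>"
  defines "m \<equiv> - h / J + sgn h * sqrt (h\<^sup>2 / J\<^sup>2 - 2 * \<epsilon> / J)"
  obtains "\<And>N. fe_expect J h N \<epsilon> \<rho> F = mc_expect N m \<rho> F"
  | m' where "m\<^sup>2 < m'\<^sup>2" "m'\<^sup>2 < \<rho>"
      "\<And>N. fe_expect J h N \<epsilon> \<rho> F = (Z_MC N m \<rho> * mc_expect N m \<rho> F + Z_MC N m' \<rho> * mc_expect N m' \<rho> F)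
                                    / (Z_MC N m \<rho> + Z_MC N m' \<rho>)"
proof -
  define s where "s = sqrt (h\<^sup>2 / J\<^sup>2 - 2 * \<epsilon> / J)"
  define m' where "m' = - h / J - sgn h * s"
  have m_sq: "m\<^sup>2 < \<rho>" using energy_set_root_sq_less[OF assms(1-3)] by (simp add: m_def)
  have \<epsilon>: "\<epsilon> \<le> h\<^sup>2 / (2 * J)" using assms(3) by (simp add: energy_set_def)
  have roots: "{m_plus J h \<epsilon>, m_minus J h \<epsilon>} = {m, m'}"
    using assms(2) by (cases "h > 0") (auto simp: m_plus_def m_minus_def m_def m'_def s_def)
  show thesis
  proof (cases "\<epsilon> = h\<^sup>2 / (2 * J)")
    case True
    then have "s = 0" using assms(1) by (simp add: s_def power2_eq_square field_simps)
    then have "m = - h / J" by (simp add: m_def s_def)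
    then have "\<rho> > h\<^sup>2 / J\<^sup>2" using m_sq by (simp add: power_divide)
    then show thesis
      using that(1) True \<open>m = - h / J\<close> by (simp add: fe_expect_def Let_def)
  next
    case False
    then have "\<epsilon> < h\<^sup>2 / (2 * J)" using \<epsilon> by simp
    then have m_less: "\<bar>m\<bar> < \<bar>m'\<bar>"
      using abs_root_less_other_root[OF assms(1,2)] by (simp add: m_def m'_def s_def)
    have m_m': "m\<^sup>2 < m'\<^sup>2" using power_strict_mono[OF m_less abs_ge_zero, of 2] by simp
    show thesis
    proof (cases "m'\<^sup>2 < \<rho>")
      case True
      show thesis
      proof (rule that(2)[OF m_m' True])
        fix N
        show "fe_expect J h N \<epsilon> \<rho> F = (Z_MC N m \<rho> * mc_expect N m \<rho> F + Z_MC N m' \<rho> * mc_expect N m' \<rho> F)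
                                    / (Z_MC N m \<rho> + Z_MC N m' \<rho>)"
          using roots \<open>\<epsilon> < h\<^sup>2 / (2 * J)\<close> m_sq True
          by (auto simp: fe_expect_def Let_def doubleton_eq_iff add.commute)
      qed
    next
      case False
      have "(if \<bar>m_plus J h \<epsilon>\<bar> < \<bar>m_minus J h \<epsilon>\<bar> then m_plus J h \<epsilon> else m_minus J h \<epsilon>) = m"
        using roots m_less by (auto simp: doubleton_eq_iff)
      then show thesis
        using that(1) roots \<open>\<epsilon> < h\<^sup>2 / (2 * J)\<close> m_sq False
        by (auto simp: fe_expect_def Let_def doubleton_eq_iff min_def max_def)
    qed
  qed
qed

lemma mixture_dev_le:
  fixes Z Z' A A' B :: real
  assumes "Z > 0" "Z' \<ge> 0" "\<bar>A\<bar> \<le> B" "\<bar>A'\<bar> \<le> B"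
  shows "\<bar>(Z * A + Z' * A') / (Z + Z') - A\<bar> \<le> 2 * B * (Z' / Z)"
proof -
  have "(Z * A + Z' * A') / (Z + Z') - A = Z' * (A' - A) / (Z + Z')"
    using assms(1,2) by (simp add: field_simps)
  also have "\<bar>\<dots>\<bar> \<le> Z' * (2 * B) / (Z + Z')"
    using assms by (simp add: abs_mult abs_div divide_right_mono mult_left_mono)
  also have "\<dots> \<le> Z' * (2 * B) / Z"
    using assms by (intro divide_left_mono mult_nonneg_nonneg) auto
  finally show ?thesis by (simp add: ac_simps)
qed

lemma fe_expect_near_mc_expect:
  assumes "J > 0" "h \<noteq> 0" "\<epsilon> \<in> energy_set J h \<rho>" "\<And>\<phi>. \<bar>F \<phi>\<bar> \<le> B"
  defines "m \<equiv> - h / J + sgn h * sqrt (h\<^sup>2 / J\<^sup>2 - 2 * \<epsilon> / J)"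
  shows "(\<lambda>N. fe_expect J h N \<epsilon> \<rho> F - mc_expect N m \<rho> F) \<in> O(\<lambda>N. 1 / sqrt (real N))"
proof (cases rule: fe_expect_cases[OF assms(1-3), where F = F, folded m_def])
  case 1
  then show ?thesis by simp
next
  case (2 m')
  have m_sq: "m\<^sup>2 < \<rho>" using energy_set_root_sq_less[OF assms(1-3)] by (simp add: m_def)
  define \<theta> where "\<theta> = (\<rho> - m'\<^sup>2) / (\<rho> - m\<^sup>2)"
  have \<theta>: "0 < \<theta>" "\<theta> < 1" using 2 m_sq by (auto simp: \<theta>_def m_def)
  have "\<bar>fe_expect J h N \<epsilon> \<rho> F - mc_expect N m \<rho> F\<bar> \<le> 2 * B * \<theta> powr ((real N - 3) / 2)" for N
  proof -
    have "\<bar>fe_expect J h N \<epsilon> \<rho> F - mc_expect N m \<rho> F\<bar> \<le> 2 * B * (Z_MC N m' \<rho> / Z_MC N m \<rho>)"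
      unfolding 2(3) m_def[symmetric] using m_sq
      by (intro mixture_dev_le abs_mc_expect_le assms(4)) (auto simp: Z_MC_def)
    also have "Z_MC N m' \<rho> / Z_MC N m \<rho> = \<theta> powr ((real N - 3) / 2)"
      using 2(2) m_sq by (simp add: Z_MC_def \<theta>_def powr_divide m_def)
    finally show ?thesis .
  qed
  then have "(\<lambda>N. fe_expect J h N \<epsilon> \<rho> F - mc_expect N m \<rho> F) \<in> O(\<lambda>N. \<theta> powr ((real N - 3) / 2))"
    by (intro bigoI[where c = "2 * B"] always_eventually) auto
  also have "(\<lambda>N. \<theta> powr ((real N - 3) / 2)) \<in> O(\<lambda>N. 1 / sqrt (real N))"
    using \<theta> by real_asymp
  finally show ?thesis .
qed

theorem theorem4p26:
  fixes J h \<rho> \<epsilon> :: real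
    and idx :: "'k::finite \<Rightarrow> nat"
    and f :: "real ^ 'k \<Rightarrow> real"
  assumes "J > 0" and "h \<noteq> 0" and "\<rho> > 0"
    and "\<epsilon> \<in> energy_set J h \<rho>"
    and "inj idx"
    and "bounded (range f)" and "1-lipschitz_on UNIV f"
  defines "m \<equiv> - h / J + sgn h * sqrt (h\<^sup>2 / J\<^sup>2 - 2 * \<epsilon> / J)"
  defines "\<mu> \<equiv> - m / (\<rho> - m\<^sup>2)"
  shows "(\<lambda>N. fe_expect J h N \<epsilon> \<rho> (f \<circ> proj idx) - c_expect N \<mu> \<rho> (f \<circ> proj idx))
           \<in> O(\<lambda>N. 1 / sqrt (real N))"
proof -
  obtain B where B: "\<And>x. \<bar>f x\<bar> \<le> B"
    using assms(6) by (auto simp: bounded_real)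
  have m: "m\<^sup>2 < \<rho>"
    using energy_set_root_sq_less[OF assms(1,2,4)] by (simp add: m_def)
  have "(\<lambda>N. fe_expect J h N \<epsilon> \<rho> (f \<circ> proj idx) - mc_expect N m \<rho> (f \<circ> proj idx))
          \<in> O(\<lambda>N. 1 / sqrt (real N))"
    using fe_expect_near_mc_expect[OF assms(1,2,4), of "f \<circ> proj idx" B] B by (simp add: m_def)
  moreover have "(\<lambda>N. c_expect N \<mu> \<rho> (f \<circ> proj idx) - mc_expect N m \<rho> (f \<circ> proj idx))
          \<in> O(\<lambda>N. 1 / sqrt (real N))"
    using c_expect_near_mc_expect[OF m assms(7) B] by (simp add: \<mu>_def)
  ultimately show ?thesis
    by (auto dest: sum_in_bigo(2))
qed

end
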